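(* In the setting of the imitative spectrum access dynamics, suppose the information sharing graph (equivalently, the cluster-based graph) is connected, and let $\boldsymbol{X}^*$ be an imitation equilibrium satisfying $U(m,\boldsymbol{X}^* )=U(i,\boldsymbol{X}^* )$ for all $m,i\in\Delta_k(\boldsymbol{X}^* )$ and all clusters $k$. Then all users achieve the same expected throughput: $U(a^*_n,\boldsymbol{X}^* )=U(a^*_{n'},\boldsymbol{X}^* )$ for all users $n,n'\in\mathcal{N}$, where $a^*_n$ is the channel chosen by user $n$ at $\boldsymbol{X}^*$. Equivalently, $U(m,\boldsymbol{X}^* )=U(i,\boldsymbol{X}^* )$ for all channels $m,i$ used by some user at $\boldsymbol{X}^*$.
   Context: There are $K$ clusters with sizes $z_k>0$ forming an undirected cluster-based graph; $\mathcal{C}_k$ is the set consisting of cluster $k$ and its neighboring clusters. A population state $\boldsymbol{X}=(\boldsymbol{X}^1,\dots,\boldsymbol{X}^K)$ has $X^k_m\ge0$, $\sum_mX^k_m=1$. $U(m,\boldsymbol{X})=\theta_mB_m\,g\big(\sum_kz_kX^k_m\big)$ is the expected throughput of a user on channel $m$, where $\theta_m\in(0,1)$, $B_m>0$ and $g(x)=\sum_{\lambda=1}^{\lambda_{\max}}\frac{1}{\lambda_{\max}}\left(\frac{\lambda_{\max}-\lambda}{\lambda_{\max}}\right)^{x-1}$. $\Delta_k(\boldsymbol{X}^* )=\{m: X^{h*}_m>0\text{ for some }h\in\mathcal{C}_k\}$. *)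

theory Defs
  imports Complex_Main
begin

text \<open>Clusters are indexed by 0..<K, channels by 0..<M. A population state is
  X :: nat => nat => real, X k m = fraction of cluster k on channel m.\<close>

definition g :: "nat \<Rightarrow> real \<Rightarrow> real" where
  "g lmax x = (\<Sum>l = 1..lmax. (1 / real lmax) *
       ((real lmax - real l) / real lmax) powr (x - 1))"

definition U :: "(nat \<Rightarrow> real) \<Rightarrow> (nat \<Rightarrow> real) \<Rightarrow> nat \<Rightarrow> (nat \<Rightarrow> real)
                  \<Rightarrow> nat \<Rightarrow> (nat \<Rightarrow> nat \<Rightarrow> real) \<Rightarrow> nat \<Rightarrow> real" where
  "U \<theta> B lmax z K X m = \<theta> m * B m * g lmax (\<Sum>k<K. z k * X k m)"

definition is_state :: "nat \<Rightarrow> nat \<Rightarrow> (nat \<Rightarrow> nat \<Rightarrow> real) \<Rightarrow> bool" where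
  "is_state K M X \<longleftrightarrow> (\<forall>k<K. (\<forall>m<M. X k m \<ge> 0) \<and> (\<Sum>m<M. X k m) = 1)"

definition nbhd :: "nat \<Rightarrow> (nat \<Rightarrow> nat \<Rightarrow> bool) \<Rightarrow> nat \<Rightarrow> nat set" where
  "nbhd K E k = {k} \<union> {h. h < K \<and> E k h}"

definition Delta :: "nat \<Rightarrow> nat \<Rightarrow> (nat \<Rightarrow> nat \<Rightarrow> bool) \<Rightarrow> (nat \<Rightarrow> nat \<Rightarrow> real) \<Rightarrow> nat \<Rightarrow> nat set" where
  "Delta K M E X k = {m. m < M \<and> (\<exists>h\<in>nbhd K E k. X h m > 0)}"

definition connected_graph :: "nat \<Rightarrow> (nat \<Rightarrow> nat \<Rightarrow> bool) \<Rightarrow> bool" where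
  "connected_graph K E \<longleftrightarrow>
     (\<forall>k h. k < K \<longrightarrow> h < K \<longrightarrow> (\<lambda>a b. a < K \<and> b < K \<and> E a b)\<^sup>*\<^sup>* k h)"

end

theory Submission
  imports Defs
begin

text \<open>
  Nothing about the particular shape of
  \<open>U\<close> is needed: for an arbitrary valuation \<open>u\<close> of the channels that is
  balanced inside every \<open>Delta k\<close>, the values of channels used in adjacent
  clusters agree, because a channel used in a neighbour of \<open>k\<close> lies in
  \<open>Delta k\<close>, and so does a channel used in \<open>k\<close> itself (which exists since the
  fractions of cluster \<open>k\<close> sum to 1).  Induction along a path of the cluster
  graph then shows that any two channels used in clusters connected by a path
  have the same value; connectivity of the graph finishes the proof.
\<close>

definition locally_balanced ::
  "nat \<Rightarrow> nat \<Rightarrow> (nat \<Rightarrow> nat \<Rightarrow> bool) \<Rightarrow> (nat \<Rightarrow> nat \<Rightarrow> real) \<Rightarrow> (nat \<Rightarrow> 'a) \<Rightarrow> bool" where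
  "locally_balanced K M E X u \<longleftrightarrow>
     (\<forall>k<K. \<forall>m\<in>Delta K M E X k. \<forall>i\<in>Delta K M E X k. u m = u i)"

lemma state_cluster_uses_channel:
  assumes "is_state K M X" and "k < K"
  obtains c where "c < M" and "X k c > 0"
proof -
  have "\<exists>c<M. X k c > 0"
  proof (rule ccontr)
    assume "\<not> (\<exists>c<M. X k c > 0)"
    then have "(\<Sum>c<M. X k c) \<le> 0" by (intro sum_nonpos) auto
    with assms show False unfolding is_state_def by auto
  qed
  then show thesis using that by blast
qed

lemma used_channel_in_Delta:
  assumes "m < M" and "X k m > 0"
  shows "m \<in> Delta K M E X k"
  using assms unfolding Delta_def nbhd_def by auto

lemma neighbour_channel_in_Delta:
  assumes "h < K" and "E k h" and "m < M" and "X h m > 0"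
  shows "m \<in> Delta K M E X k"
  using assms unfolding Delta_def nbhd_def by auto

lemma balanced_along_path:
  assumes path: "(\<lambda>a b. a < K \<and> b < K \<and> E a b)\<^sup>*\<^sup>* h k"
    and "h < K"
    and state: "is_state K M X"
    and bal: "locally_balanced K M E X u"
  shows "\<And>m i. m < M \<Longrightarrow> X h m > 0 \<Longrightarrow> i < M \<Longrightarrow> X k i > 0 \<Longrightarrow> u m = u i"
  using path
proof (induction rule: rtranclp_induct)
  case base
  then show ?case
    using bal \<open>h < K\<close> used_channel_in_Delta unfolding locally_balanced_def by blast
next
  case (step y w)
  then have "y < K" "w < K" "E y w" by auto
  obtain c where c: "c < M" "X y c > 0"
    using state_cluster_uses_channel[OF state \<open>y < K\<close>] .
  have "u m = u c" using step.IH[OF step.prems(1,2) c] .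
  also have "u c = u i"
    using bal \<open>y < K\<close> used_channel_in_Delta[of c M X y K E, OF c]
      neighbour_channel_in_Delta[of w K E y i M X, OF \<open>w < K\<close> \<open>E y w\<close> step.prems(3,4)]
    unfolding locally_balanced_def by blast
  finally show ?case .
qed

lemma connected_balanced_constant:
  assumes "connected_graph K E" and "is_state K M X"
    and "locally_balanced K M E X u"
    and "m < M" "h < K" "X h m > 0" and "i < M" "k < K" "X k i > 0"
  shows "u m = u i"
  using assms balanced_along_path[of K E h k M X u]
  unfolding connected_graph_def by blast

theorem corollary1:
  fixes K M lmax :: nat and E :: "nat \<Rightarrow> nat \<Rightarrow> bool"
    and z \<theta> B :: "nat \<Rightarrow> real" and X :: "nat \<Rightarrow> nat \<Rightarrow> real"
  assumes sym: "\<And>a b. E a b \<Longrightarrow> E b a"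
    and irrefl: "\<And>a. \<not> E a a"
    and conn: "connected_graph K E"
    and zpos: "\<And>k. k < K \<Longrightarrow> z k > 0"
    and theta: "\<And>m. m < M \<Longrightarrow> 0 < \<theta> m \<and> \<theta> m < 1"
    and Bpos: "\<And>m. m < M \<Longrightarrow> B m > 0"
    and lmax: "lmax \<ge> 1"
    and state: "is_state K M X"
    and eq: "\<And>k m i. k < K \<Longrightarrow> m \<in> Delta K M E X k \<Longrightarrow> i \<in> Delta K M E X k \<Longrightarrow>
               U \<theta> B lmax z K X m = U \<theta> B lmax z K X i"
  shows "\<forall>m<M. \<forall>i<M. (\<exists>h<K. X h m > 0) \<longrightarrow> (\<exists>h<K. X h i > 0) \<longrightarrow>
           U \<theta> B lmax z K X m = U \<theta> B lmax z K X i"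
proof -
  have bal: "locally_balanced K M E X (U \<theta> B lmax z K X)"
    using eq unfolding locally_balanced_def by blast
  show ?thesis
    using connected_balanced_constant[OF conn state bal] by blast
qed

end
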